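(* Let $G=K_n$ and let $F(v)=1-e^{-v}$ ($v\ge0$) be the exponential distribution (which is regular with virtual value $\phi(v)=v-1$ and Myerson reserve price $1$). Then: (i) for every price $p>0$, every equilibrium in $\mathcal{N}_{p\cdot\mathbf{1}}$ is symmetric, i.e. of the form $T\cdot\mathbf{1}$ with $T\,F(T)^{n-1}=p$, and this $T$ is unique; (ii) for all sufficiently large $n$, the equilibrium revenue at price $1$ is less than $2\log\log n$, while at price $p=(\log n)(1-1/n)^{n-1}$ the equilibrium threshold is $\log n$ and the revenue equals $p>\tfrac14\log n$. Hence the uniform price equal to the Myerson reserve price can lose a factor $\Omega(\log n/\log\log n)$ relative to the best uniform price.
   Context: Public-goods pricing game on the complete graph $K_n$: buyer $i$'s neighbours are all $j\neq i$. Values i.i.d. with cumulative distribution function $F$, $F(\infty)=1$. An equilibrium for price vector $\mathbf{p}$ is $\mathbf{T}\in[0,\infty]^n$ (buyer $i$ purchases iff $v_i\ge T_i$) with $T_i=p_i/\prod_{j\neq i}F(T_j)$ for all $i$; $\mathcal{N}_{\mathbf{p}}$ is the set of equilibria; $\mathcal{R}(\mathbf{p},\mathbf{T})=\sum_ip_i(1-F(T_i))$; $p\cdot\mathbf{1}$ is the uniform price vector; $\log$ is the natural logarithm. *)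

theory Defs
  imports "HOL-Analysis.Analysis"
begin

definition expF :: "ereal \<Rightarrow> real" where
  "expF v = (case v of ereal x \<Rightarrow> (if 0 \<le> x then 1 - exp (- x) else 0)
                     | PInfty \<Rightarrow> 1 | MInfty \<Rightarrow> 0)"

text \<open>Equilibrium on the complete graph K_n (buyers 0..n-1) for price vector p:
  T_i \<in> [0,\<infinity>] and T_i = p_i / prod_{j \<noteq> i} F(T_j), with the convention p_i/0 = \<infinity>
  (p_i > 0 in all uses below).\<close>
definition is_equilibrium :: "nat \<Rightarrow> (nat \<Rightarrow> real) \<Rightarrow> (nat \<Rightarrow> ereal) \<Rightarrow> bool" where
  "is_equilibrium n p T \<longleftrightarrow>
     (\<forall>i<n. 0 \<le> T i \<and>
        T i = (let q = (\<Prod>j\<in>{..<n} - {i}. expF (T j))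
               in if q = 0 then \<infinity> else ereal (p i / q)))"

definition revenue :: "nat \<Rightarrow> (nat \<Rightarrow> real) \<Rightarrow> (nat \<Rightarrow> ereal) \<Rightarrow> real" where
  "revenue n p T = (\<Sum>i<n. p i * (1 - expF (T i)))"

end

theory Submission imports Defs begin

(* At a positive uniform price p every equilibrium threshold is finite and
   positive, so buyer i satisfies  x_i * prod_{j<>i} F(x_j) = p.  Dividing by
   P = prod_j F(x_j) gives  x_i / F(x_i) = p / P  for every i; since x / F(x) is strictly
   increasing on (0,oo), all thresholds coincide, and the common value t solves
   t * F(t)^(n-1) = p.  The map t -> t * F(t)^k is strictly increasing and continuous
   from 0 to oo, so t exists and is unique.

   A symmetric equilibrium with threshold t has revenue n * p * exp(-t).
   At price 1, if the revenue were >= 2 ln ln n, then exp(-t) >= c := 2 ln ln n / n, hence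
   t <= ln n and  1 = t F(t)^(n-1) <= ln n * exp(-(n-1) c) < 1.  At the price
   p = ln n * (1 - 1/n)^(n-1) the threshold is exactly ln n, so the revenue is
   n p / n = p, and p > ln n / 4 because (1 - 1/n)^(n-1) >= 1/e > 1/4.
   Comparing the two revenues gives the factor ln n / ln ln n with constant 1/8. *)

section \<open>The symmetric threshold equation\<close>

lemma threshold_eq_strict_mono:
  "strict_mono_on {0..} (\<lambda>t::real. t * (1 - exp (- t)) ^ k)"
proof (rule strict_mono_onI)
  fix s t :: real
  assume "s \<in> {0..}" "t \<in> {0..}" "s < t"
  then have s: "0 \<le> s" and st: "s < t" by auto
  have "(1 - exp (- s)) ^ k \<le> (1 - exp (- t)) ^ k"
    using s st by (intro power_mono) auto
  then have "s * (1 - exp (- s)) ^ k \<le> s * (1 - exp (- t)) ^ k"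
    using s by (rule mult_left_mono)
  also have "\<dots> < t * (1 - exp (- t)) ^ k"
    using s st by simp
  finally show "s * (1 - exp (- s)) ^ k < t * (1 - exp (- t)) ^ k" .
qed

lemma threshold_eq_unique:
  fixes s t :: real
  assumes "0 \<le> s" "0 \<le> t" "s * (1 - exp (- s)) ^ k = t * (1 - exp (- t)) ^ k"
  shows "s = t"
  using strict_mono_on_eqD[OF threshold_eq_strict_mono assms(3)] assms(1,2) by simp

text \<open>Every positive price is attained: at M = 2p + 2k + 2 Bernoulli's inequality gives
  F(M)^k \<ge> 1/2, so the value there is at least p, and the intermediate value theorem applies.\<close>
lemma threshold_eq_solvable:
  fixes p :: real
  assumes p: "0 < p"
  shows "\<exists>t\<ge>0. t * (1 - exp (- t)) ^ k = p"
proof -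
  define M where "M = 2 * p + 2 * real k + 2"
  have M: "0 \<le> M" using p by (simp add: M_def)
  have "1 + M \<le> exp M" by simp
  then have "2 * real k \<le> exp M" using p by (simp add: M_def)
  then have "real k * exp (- M) \<le> 1/2"
    by (simp add: exp_minus field_simps)
  moreover have "1 + real k * (- exp (- M)) \<le> (1 + (- exp (- M))) ^ k"
    by (rule Bernoulli_inequality) (simp add: M)
  ultimately have "1/2 \<le> (1 - exp (- M)) ^ k" by simp
  then have "M * (1/2) \<le> M * (1 - exp (- M)) ^ k" using M by (rule mult_left_mono)
  then have "p \<le> M * (1 - exp (- M)) ^ k" by (simp add: M_def)
  moreover have "0 * (1 - exp (- 0)) ^ k \<le> p" using p by simp
  ultimately have "\<exists>t. 0 \<le> t \<and> t \<le> M \<and> t * (1 - exp (- t)) ^ k = p"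
    using M by (intro IVT) (auto intro!: continuous_intros)
  then show ?thesis by blast
qed

text \<open>x / F(x) is strictly increasing on (0,\<infinity>): its derivative has numerator
  F(x) - x exp(-x) = exp(-x) (exp x - 1 - x) > 0.\<close>
lemma ratio_strict_mono: "strict_mono_on {0<..} (\<lambda>x::real. x / (1 - exp (- x)))"
proof (rule strict_mono_onI)
  fix x y :: real
  assume "x \<in> {0<..}" "y \<in> {0<..}" "x < y"
  then have x: "0 < x" and xy: "x < y" by auto
  show "x / (1 - exp (- x)) < y / (1 - exp (- y))"
  proof (rule DERIV_pos_imp_increasing[OF xy])
    fix z :: real
    assume "x \<le> z" "z \<le> y"
    then have z: "0 < z" using x by simp
    then have F: "0 < 1 - exp (- z)" by simp
    have "((\<lambda>z. z / (1 - exp (- z))) has_real_derivative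
          ((1 - exp (- z)) - z * exp (- z)) / (1 - exp (- z))^2) (at z)"
      using F by (auto intro!: derivative_eq_intros simp: power2_eq_square field_simps)
    moreover have "1 + z < exp z"
      using exp_minus_greater[of "- z"] z by simp
    then have "exp (- z) * (1 + z) < exp (- z) * exp z" by simp
    then have "0 < (1 - exp (- z)) - z * exp (- z)"
      by (simp add: exp_minus_inverse algebra_simps)
    ultimately show "\<exists>d. ((\<lambda>z. z / (1 - exp (- z))) has_real_derivative d) (at z) \<and> 0 < d"
      using F by auto
  qed
qed

section \<open>Equilibria at positive prices\<close>

lemma expF_nonneg: "0 \<le> expF v"
  by (cases v) (auto simp: expF_def)

lemma expF_ereal: "0 \<le> x \<Longrightarrow> expF (ereal x) = 1 - exp (- x)"
  by (simp add: expF_def)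

lemma equilibrium_real_thresholds:
  assumes E: "is_equilibrium n p T" and p: "\<And>i. i < n \<Longrightarrow> 0 < p i"
  obtains x where "\<And>i. i < n \<Longrightarrow> 0 < x i" "\<And>i. i < n \<Longrightarrow> T i = ereal (x i)"
    "\<And>i. i < n \<Longrightarrow> x i * (\<Prod>j\<in>{..<n} - {i}. 1 - exp (- x j)) = p i"
proof -
  define q where "q i = (\<Prod>j\<in>{..<n} - {i}. expF (T j))" for i
  have T_eq: "T i = (if q i = 0 then \<infinity> else ereal (p i / q i))" if "i < n" for i
    using E that unfolding is_equilibrium_def q_def Let_def by blast
  have q_nonneg: "0 \<le> q i" for i
    unfolding q_def by (intro prod_nonneg) (simp add: expF_nonneg)
  text \<open>No buyer is certain not to buy: an infinite threshold has F = 1, a finite one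
    is p_j / q_j > 0.\<close>
  have F_pos: "0 < expF (T j)" if j: "j < n" for j
  proof (cases "q j = 0")
    case True
    then show ?thesis using T_eq[OF j] by (simp add: expF_def)
  next
    case False
    then have "0 < p j / q j" using q_nonneg[of j] p[OF j] by simp
    then show ?thesis using T_eq[OF j] False by (simp add: expF_def)
  qed
  have q_pos: "0 < q i" for i
    unfolding q_def by (intro prod_pos) (auto intro: F_pos)
  define x where "x i = p i / q i" for i
  have x_pos: "0 < x i" if "i < n" for i
    using q_pos[of i] p[OF that] by (simp add: x_def)
  have T_x: "T i = ereal (x i)" if "i < n" for i
    using T_eq[OF that] q_pos[of i] by (simp add: x_def)
  have x_q: "x i * q i = p i" for i
    using q_pos[of i] by (simp add: x_def)
  have "q i = (\<Prod>j\<in>{..<n} - {i}. 1 - exp (- x j))" for i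
    unfolding q_def using T_x x_pos by (intro prod.cong) (auto simp: expF_ereal less_imp_le)
  then have "x i * (\<Prod>j\<in>{..<n} - {i}. 1 - exp (- x j)) = p i" for i
    using x_q[of i] by simp
  with x_pos T_x show thesis by (rule that)
qed

lemma uniform_equilibrium_symmetric:
  assumes n: "1 \<le> n" and p: "0 < p" and E: "is_equilibrium n (\<lambda>_. p) T"
  obtains s where "0 < s" "s * (1 - exp (- s)) ^ (n - 1) = p" "\<forall>i<n. T i = ereal s"
proof -
  obtain x where x_pos: "\<And>i. i < n \<Longrightarrow> 0 < x i"
    and T_x: "\<And>i. i < n \<Longrightarrow> T i = ereal (x i)"
    and x_eq: "\<And>i. i < n \<Longrightarrow> x i * (\<Prod>j\<in>{..<n} - {i}. 1 - exp (- x j)) = p"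
    using equilibrium_real_thresholds[OF E] p by blast
  define P where "P = (\<Prod>j<n. 1 - exp (- x j))"
  have ratio: "x i / (1 - exp (- x i)) = p / P" if i: "i < n" for i
  proof -
    define q where "q = (\<Prod>j\<in>{..<n} - {i}. 1 - exp (- x j))"
    have P_eq: "P = (1 - exp (- x i)) * q"
      unfolding P_def q_def using i by (simp add: prod.remove)
    have x_q: "x i * q = p" using x_eq[OF i] by (simp add: q_def)
    then have "q \<noteq> 0" using p by auto
    have "p / P = (x i * q) / ((1 - exp (- x i)) * q)" using P_eq x_q by simp
    also have "\<dots> = x i / (1 - exp (- x i))" using \<open>q \<noteq> 0\<close> by simp
    finally show ?thesis by simp
  qed
  define s where "s = x 0"
  have s_pos: "0 < s" using x_pos[of 0] n by (simp add: s_def)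
  have same: "x i = s" if i: "i < n" for i
  proof -
    have "s / (1 - exp (- s)) = x i / (1 - exp (- x i))"
      using ratio[OF i] ratio[of 0] n by (simp add: s_def)
    from strict_mono_on_eqD[OF ratio_strict_mono this] show ?thesis
      using x_pos[OF i] s_pos by simp
  qed
  have "(\<Prod>j\<in>{..<n} - {0}. 1 - exp (- x j)) = (\<Prod>j\<in>{..<n} - {0}. 1 - exp (- s))"
    using same by (intro prod.cong) auto
  also have "\<dots> = (1 - exp (- s)) ^ (n - 1)"
    using n by simp
  finally have "s * (1 - exp (- s)) ^ (n - 1) = p"
    using x_eq[of 0] n by (simp add: s_def)
  moreover have "\<forall>i<n. T i = ereal s"
    using T_x same by simp
  ultimately show thesis using that s_pos by simp
qed

lemma uniform_equilibrium_threshold: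
  assumes "1 \<le> n" "0 < p" "0 \<le> t" "t * (1 - exp (- t)) ^ (n - 1) = p"
    and E: "is_equilibrium n (\<lambda>_. p) T"
  shows "\<forall>i<n. T i = ereal t"
proof -
  obtain s where "0 < s" "s * (1 - exp (- s)) ^ (n - 1) = p" "\<forall>i<n. T i = ereal s"
    using uniform_equilibrium_symmetric[OF assms(1,2) E] .
  moreover have "s = t"
    using threshold_eq_unique[of s t "n - 1"] assms(3,4) calculation(1,2) by simp
  ultimately show ?thesis by simp
qed

lemma uniform_price_equilibrium:
  assumes n: "1 \<le> n" and p: "0 < p"
  shows "\<exists>t::real. t \<ge> 0 \<and> t * (1 - exp (- t)) ^ (n - 1) = p
           \<and> (\<forall>s::real. s \<ge> 0 \<and> s * (1 - exp (- s)) ^ (n - 1) = p \<longrightarrow> s = t)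
           \<and> (\<forall>T. is_equilibrium n (\<lambda>_. p) T \<longrightarrow> (\<forall>i<n. T i = ereal t))"
proof -
  obtain t where t: "t \<ge> 0" "t * (1 - exp (- t)) ^ (n - 1) = p"
    using threshold_eq_solvable[OF p] by blast
  then show ?thesis
    using threshold_eq_unique[of _ t "n - 1"] uniform_equilibrium_threshold[OF n p t] by metis
qed

lemma revenue_symmetric:
  assumes "\<forall>i<n. T i = ereal t" "0 \<le> t"
  shows "revenue n (\<lambda>_. p) T = real n * p * exp (- t)"
proof -
  have "revenue n (\<lambda>_. p) T = (\<Sum>i<n. p * exp (- t))"
    unfolding revenue_def using assms by (intro sum.cong) (auto simp: expF_def)
  then show ?thesis by simp
qed

section \<open>Revenue at the Myerson reserve price 1\<close>

lemma one_minus_pow_le_exp: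
  fixes c :: real
  assumes "c \<le> 1"
  shows "(1 - c) ^ m \<le> exp (- (real m * c))"
proof -
  have "(1 - c) ^ m \<le> exp (- c) ^ m"
    using assms exp_ge_add_one_self[of "- c"] by (intro power_mono) auto
  also have "\<dots> = exp (- (real m * c))"
    by (simp flip: exp_of_nat_mult)
  finally show ?thesis .
qed

lemma unit_price_threshold_bound:
  assumes n: "3 \<le> n" and lnln: "1 \<le> ln (ln (real n))"
    and t: "0 \<le> t" "t * (1 - exp (- t)) ^ (n - 1) = 1"
  shows "real n * exp (- t) < 2 * ln (ln (real n))"
proof (rule ccontr)
  define L where "L = ln (real n)"
  define c where "c = 2 * ln L / real n"
  have n_pos: "0 < real n" using n by simp
  have L_pos: "0 < L" unfolding L_def using n by (intro ln_gt_zero) simp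
  assume "\<not> ?thesis"
  then have c_le: "c \<le> exp (- t)"
    using n_pos by (simp add: c_def L_def field_simps)
  have "exp (- L) = 1 / real n"
    using n_pos by (simp add: L_def exp_minus inverse_eq_divide)
  also have "\<dots> \<le> c"
    using lnln n_pos by (simp add: c_def L_def divide_right_mono)
  finally have "exp (- L) \<le> exp (- t)" using c_le by (rule order_trans)
  then have t_le: "t \<le> L" by simp
  have "(1 - exp (- t)) ^ (n - 1) \<le> (1 - c) ^ (n - 1)"
    using c_le t by (intro power_mono) auto
  also have "\<dots> \<le> exp (- (real (n - 1) * c))"
  proof (rule one_minus_pow_le_exp)
    show "c \<le> 1" using c_le t(1) by (meson exp_le_one_iff neg_le_0_iff_le order_trans)
  qed
  finally have F_le: "(1 - exp (- t)) ^ (n - 1) \<le> exp (- (real (n - 1) * c))" .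
  text \<open>(n-1) c = 2 (1 - 1/n) ln L exceeds ln L since n \<ge> 3.\<close>
  have "real (n - 1) * c - ln L = ln L * (real n - 2) / real n"
    using n n_pos by (simp add: c_def of_nat_diff field_simps)
  also have "\<dots> > 0"
    using lnln n by (intro divide_pos_pos mult_pos_pos) (auto simp: L_def simp del: ln_gt_zero_iff)
  finally have "exp (- (real (n - 1) * c)) < exp (- ln L)" by simp
  also have "\<dots> = 1 / L" using L_pos by (simp add: exp_minus inverse_eq_divide)
  finally have "L * exp (- (real (n - 1) * c)) < 1" using L_pos by (simp add: field_simps)
  moreover have "1 \<le> L * exp (- (real (n - 1) * c))"
    using t(2) mult_mono[OF t_le F_le] L_pos t(1) by (simp add: zero_le_power)
  ultimately show False by simp
qed

lemma unit_price_revenue_small: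
  assumes n: "3 \<le> n" and lnln: "1 \<le> ln (ln (real n))" and E: "is_equilibrium n (\<lambda>_. 1) T"
  shows "revenue n (\<lambda>_. 1) T < 2 * ln (ln (real n))"
proof -
  obtain t where t: "t \<ge> 0" "t * (1 - exp (- t)) ^ (n - 1) = 1" "\<forall>i<n. T i = ereal t"
    using uniform_price_equilibrium[of n 1] n E by auto
  then show ?thesis
    using revenue_symmetric[OF t(3,1), of 1] unit_price_threshold_bound[OF n lnln t(1,2)] by simp
qed

section \<open>Revenue at the price ln n * (1 - 1/n)^(n-1)\<close>

text \<open>(1 - 1/n)^(n-1) > 1/4: its reciprocal is (1 + 1/(n-1))^(n-1) \<le> e < 4.\<close>
lemma one_minus_inverse_pow_gt_quarter:
  assumes n: "2 \<le> n"
  shows "1/4 < (1 - 1 / real n) ^ (n - 1)"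
proof -
  define m where "m = n - 1"
  have m: "real m = real n - 1" "0 < real m" using n by (auto simp: m_def of_nat_diff)
  have "(1 + 1 / real m) ^ m \<le> exp (1 / real m) ^ m"
    using m exp_ge_add_one_self[of "1 / real m"] by (intro power_mono) auto
  also have "\<dots> = exp 1"
    using m by (simp flip: exp_of_nat_mult)
  also have "\<dots> < 4" using e_less_272 by simp
  finally have B: "(1 + 1 / real m) ^ m < 4" .
  have "(1 - 1 / real n) * (1 + 1 / real m) = 1"
    using m(2) by (simp add: m(1) field_simps)
  then have "1 = (1 - 1 / real n) ^ m * (1 + 1 / real m) ^ m"
    by (metis power_mult_distrib power_one)
  also have "\<dots> < (1 - 1 / real n) ^ m * 4"
    using B n by (intro mult_strict_left_mono) auto
  finally show ?thesis by (simp add: m_def)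
qed

text \<open>At this price the threshold equation is solved by t = ln n, since F(ln n) = 1 - 1/n,
  and each buyer buys with probability 1/n, so the revenue equals the price.\<close>
lemma log_price_equilibrium:
  assumes n: "2 \<le> n"
    and E: "is_equilibrium n (\<lambda>_. ln (real n) * (1 - 1 / real n) ^ (n - 1)) T"
  shows "(\<forall>i<n. T i = ereal (ln (real n)))
       \<and> revenue n (\<lambda>_. ln (real n) * (1 - 1 / real n) ^ (n - 1)) T
           = ln (real n) * (1 - 1 / real n) ^ (n - 1)"
proof -
  define L where "L = ln (real n)"
  define p where "p = L * (1 - 1 / real n) ^ (n - 1)"
  have L_pos: "0 < L" using n by (simp add: L_def)
  have exp_L: "exp (- L) = 1 / real n"
    using n by (simp add: L_def exp_minus inverse_eq_divide)
  have "0 < p" using L_pos n by (simp add: p_def)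
  moreover have "L * (1 - exp (- L)) ^ (n - 1) = p"
    by (simp add: exp_L p_def)
  ultimately have T_L: "\<forall>i<n. T i = ereal L"
    using uniform_equilibrium_threshold[of n p L T] n L_pos E by (simp add: p_def L_def)
  have "revenue n (\<lambda>_. p) T = real n * p * exp (- L)"
    using revenue_symmetric[OF T_L] L_pos by simp
  also have "\<dots> = p" using n by (simp add: exp_L)
  finally show ?thesis using T_L by (simp add: p_def L_def)
qed

lemma log_price_gt_quarter_log:
  assumes "2 \<le> n"
  shows "ln (real n) / 4 < ln (real n) * (1 - 1 / real n) ^ (n - 1)"
  using one_minus_inverse_pow_gt_quarter[OF assms] assms
  by (simp add: mult_strict_left_mono[of "1/4", simplified])

lemma revenue_gap:
  assumes n: "3 \<le> n" and lnln: "1 \<le> ln (ln (real n))"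
    and E1: "is_equilibrium n (\<lambda>_. 1) T1"
    and E2: "is_equilibrium n (\<lambda>_. ln (real n) * (1 - 1 / real n) ^ (n - 1)) T2"
  shows "1/8 * (ln (real n) / ln (ln (real n))) * revenue n (\<lambda>_. 1) T1
       \<le> revenue n (\<lambda>_. ln (real n) * (1 - 1 / real n) ^ (n - 1)) T2"
proof -
  have "0 < ln (real n)" using n by (intro ln_gt_zero) simp
  then have factor_pos: "0 < 1/8 * (ln (real n) / ln (ln (real n)))"
    using lnln by (intro mult_pos_pos divide_pos_pos) (auto simp del: ln_gt_zero_iff)
  have "1/8 * (ln (real n) / ln (ln (real n))) * revenue n (\<lambda>_. 1) T1
      \<le> 1/8 * (ln (real n) / ln (ln (real n))) * (2 * ln (ln (real n)))"
    using unit_price_revenue_small[OF n lnln E1] factor_pos by (intro mult_left_mono) auto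
  also have "\<dots> = ln (real n) / 4" using lnln by simp
  also have "\<dots> < ln (real n) * (1 - 1 / real n) ^ (n - 1)"
    using n by (intro log_price_gt_quarter_log) simp
  also have "\<dots> = revenue n (\<lambda>_. ln (real n) * (1 - 1 / real n) ^ (n - 1)) T2"
    using log_price_equilibrium[OF _ E2] n by simp
  finally show ?thesis by simp
qed

lemma eventually_large: "\<forall>\<^sub>F n in sequentially. 3 \<le> n \<and> 1 \<le> ln (ln (real n))"
proof -
  have "\<forall>\<^sub>F n in sequentially. exp (exp 1) \<le> real n"
    using filterlim_real_sequentially unfolding filterlim_at_top by blast
  moreover have "\<forall>\<^sub>F n in sequentially. 3 \<le> n" by (rule eventually_ge_at_top)
  ultimately show ?thesis
  proof eventually_elim
    case (elim n)
    then have "exp 1 \<le> ln (real n)" by (subst ln_ge_iff) auto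
    moreover have "0 < exp (1::real)" by simp
    ultimately show ?case using elim(2) by (subst ln_ge_iff) auto
  qed
qed

theorem mainTheorem15:
  shows "(\<forall>n::nat. \<forall>p::real. n \<ge> 1 \<and> p > 0 \<longrightarrow>
            (\<exists>t::real. t \<ge> 0 \<and> t * (1 - exp (- t)) ^ (n - 1) = p
               \<and> (\<forall>s::real. s \<ge> 0 \<and> s * (1 - exp (- s)) ^ (n - 1) = p \<longrightarrow> s = t)
               \<and> (\<forall>T. is_equilibrium n (\<lambda>_. p) T \<longrightarrow> (\<forall>i<n. T i = ereal t))))
   \<and> (\<forall>\<^sub>F n in sequentially.
         (\<forall>T. is_equilibrium n (\<lambda>_. 1) T \<longrightarrow>
              revenue n (\<lambda>_. 1) T < 2 * ln (ln (real n)))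
       \<and> (let p = ln (real n) * (1 - 1 / real n) ^ (n - 1) in
            (\<forall>T. is_equilibrium n (\<lambda>_. p) T \<longrightarrow>
                 (\<forall>i<n. T i = ereal (ln (real n))) \<and> revenue n (\<lambda>_. p) T = p)
            \<and> p > ln (real n) / 4))
   \<and> (\<exists>c>0. \<forall>\<^sub>F n in sequentially.
         \<forall>T1 T2. is_equilibrium n (\<lambda>_. 1) T1 \<longrightarrow>
           is_equilibrium n (\<lambda>_. ln (real n) * (1 - 1 / real n) ^ (n - 1)) T2 \<longrightarrow>
           revenue n (\<lambda>_. ln (real n) * (1 - 1 / real n) ^ (n - 1)) T2
             \<ge> c * (ln (real n) / ln (ln (real n))) * revenue n (\<lambda>_. 1) T1)"
  apply (intro conjI)
  subgoal
    using uniform_price_equilibrium by blast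
  subgoal
    using eventually_large
  proof eventually_elim
    case (elim n)
    then have "2 \<le> n" by simp
    with elim show ?case
      using log_price_equilibrium log_price_gt_quarter_log unit_price_revenue_small
      unfolding Let_def by blast
  qed
  subgoal
  proof (intro exI[of _ "1/8"] conjI)
    show "(0::real) < 1/8" by simp
  qed (rule eventually_mono[OF eventually_large], blast intro: revenue_gap)
  done

end
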